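(* Let $(\Xi,d_\Xi)$ be a metric space, let $\{P^\nu\}_{\nu\in\mathbb{N}}$ be probabilities on $(\Xi,\mathcal{B}(\Xi))$ converging weakly to a probability $P$, and let $\{h^\nu\}_{\nu\in\mathbb{N}}$ be measurable $\overline{\mathbb{R}}$-valued functions on $\Xi$ such that $$\liminf_{K\to+\infty}\ \liminf_{\nu\to+\infty}\mathbb{E}^{P^\nu}\big[h^\nu(\xi)\,\mathbb{1}\{\xi:h^\nu(\xi)\le -K\}\big]=0.$$ Then $$\liminf_{\nu\to+\infty}\mathbb{E}^{P^\nu}\big[h^\nu(\xi)\big]\ \ge\ \mathbb{E}^{P}\Big[\liminf_{(\nu,\zeta)\to(+\infty,\xi)}h^\nu(\zeta)\Big].$$
   Context: $\overline{\mathbb{R}}=\mathbb{R}\cup\{-\infty,+\infty\}$; $\mathcal{B}(\Xi)$ is the Borel $\sigma$-algebra; weak convergence means $\int\varphi\,dP^\nu\to\int\varphi\,dP$ for all bounded continuous $\varphi$. For a probability $\mu$ and measurable $\overline{\mathbb{R}}$-valued $g$, $\mathbb{E}^\mu[g]:=\int g_+\,d\mu-\int g_-\,d\mu$ with conventions $+\infty-\alpha=+\infty$ for all $\alpha\in\overline{\mathbb{R}}$ (in particular the expectation equals $+\infty$ when both $\int g_+$ and $\int g_-$ are $+\infty$) and $\beta-(+\infty)=-\infty$ for $\beta\in\mathbb{R}$. $\mathbb{1}\{B\}$ is the indicator of $B$. $\liminf_{(\nu,\zeta)\to(+\infty,\xi)}h^\nu(\zeta):=\lim_{\delta\downarrow0}\lim_{N\to\infty}\inf\{h^\nu(\zeta):\nu\ge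 N,\ d_\Xi(\zeta,\xi)<\delta\}$. *)

theory Defs
  imports "HOL-Probability.Probability"
begin

definition ext_expectation :: "'a measure \<Rightarrow> ('a \<Rightarrow> ereal) \<Rightarrow> ereal" where
  "ext_expectation \<mu> g =
     (let pos = (\<integral>\<^sup>+ x. e2ennreal (g x) \<partial>\<mu>);
          neg = (\<integral>\<^sup>+ x. e2ennreal (- g x) \<partial>\<mu>)
      in if pos = \<infinity> then \<infinity> else enn2ereal pos - enn2ereal neg)"

definition weak_conv_measures :: "(nat \<Rightarrow> 'a::topological_space measure) \<Rightarrow> 'a measure \<Rightarrow> bool" where
  "weak_conv_measures Ps P \<longleftrightarrow>
     (\<forall>\<phi> :: 'a \<Rightarrow> real. continuous_on UNIV \<phi> \<and> bounded (range \<phi>) \<longrightarrow>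
        (\<lambda>n. \<integral>x. \<phi> x \<partial>Ps n) \<longlonglongrightarrow> (\<integral>x. \<phi> x \<partial>P))"

text \<open>liminf_{(nu,zeta) -> (+infinity, xi)} h^nu(zeta)
  = lim_{delta -> 0+} lim_{N -> infinity} inf { h^nu(zeta) : nu >= N, d(zeta,xi) < delta }.
  Both limits are of monotone (nondecreasing) families in the complete lattice of extended
  reals, hence equal to the corresponding suprema.\<close>
definition epi_liminf :: "(nat \<Rightarrow> 'a::metric_space \<Rightarrow> ereal) \<Rightarrow> 'a \<Rightarrow> ereal" where
  "epi_liminf h \<xi> =
     (SUP \<delta>\<in>{0<..}. SUP N. INF p \<in> {(\<nu>, \<zeta>). \<nu> \<ge> N \<and> dist \<zeta> \<xi> < (\<delta>::real)}. h (fst p) (snd p))"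

end

theory Submission
  imports Defs
begin

text \<open>
  Fix \<open>K \<ge> 0\<close> and write \<open>f\<close> for the epigraphical liminf of \<open>h\<close>. Inf-convolutions of clipped local
  infima of \<open>h\<close> give bounded Lipschitz functions \<open>\<psi>\<^sub>m\<close> that increase to \<open>(f + K)\<^sub>+\<close> and satisfy
  \<open>\<psi>\<^sub>m \<le> (h\<^sup>\<nu> + K)\<^sub>+\<close> for \<open>\<nu> \<ge> m\<close>. Weak convergence moves \<open>\<integral>\<psi>\<^sub>m\<close> from \<open>P\<^sup>\<nu>\<close> to \<open>P\<close>, and monotone
  convergence gives \<open>E\<^sub>P[f] + K \<le> sup\<^sub>m \<integral>\<psi>\<^sub>m dP\<close>. On the other side,
  \<open>E[(g + K)\<^sub>+] + E[g 1{g \<le> -K}] \<le> E[g] + K\<close> for every \<open>g\<close>, so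
  \<open>E\<^sub>P[f] + liminf\<^sub>\<nu> E[h\<^sup>\<nu> 1{h\<^sup>\<nu> \<le> -K}] \<le> liminf\<^sub>\<nu> E[h\<^sup>\<nu>]\<close>, and the error term vanishes
  along \<open>K \<rightarrow> \<infinity>\<close> by hypothesis.
\<close>

section \<open>Expectations of shifted functions\<close>

lemma enn2ereal_e2ennreal_max: "enn2ereal (e2ennreal x) = max 0 x"
  by (cases "0 \<le> x") (auto simp: enn2ereal_e2ennreal e2ennreal_neg zero_ennreal.rep_eq)

lemma enn2ereal_ennreal_max: "enn2ereal (ennreal r) = ereal (max 0 r)"
  by (metis e2ennreal_ereal enn2ereal_e2ennreal_max max_def zero_ereal_def ereal_less_eq(3))

lemma enn2ereal_SUP_ennreal:
  "(\<And>i. 0 \<le> x i) \<Longrightarrow> enn2ereal (SUP i. ennreal (x i)) = (SUP i. ereal (x i))"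
  by (simp add: Sup_ennreal.rep_eq image_comp max_absorb2 SUP_upper2)

lemma e2ennreal_add_ereal_le:
  fixes g :: ereal
  assumes "0 \<le> K"
  shows "e2ennreal (g + ereal K) \<le> e2ennreal g + ennreal K"
  using assms unfolding less_eq_ennreal.rep_eq
  by (cases g) (auto simp: plus_ennreal.rep_eq enn2ereal_e2ennreal_max enn2ereal_ennreal_max max_def)

lemma e2ennreal_add_ennreal_le:
  fixes g :: ereal
  assumes "0 \<le> K"
  shows "e2ennreal g + ennreal K \<le> e2ennreal (g + ereal K) + e2ennreal (- g)"
  using assms unfolding less_eq_ennreal.rep_eq
  by (cases g) (auto simp: plus_ennreal.rep_eq enn2ereal_e2ennreal_max enn2ereal_ennreal_max max_def)

lemma e2ennreal_add_ereal_add_neg_le: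
  fixes g :: ereal
  assumes "0 \<le> K"
  shows "e2ennreal (g + ereal K) + e2ennreal (- g)
    \<le> e2ennreal g + ennreal K + e2ennreal (- (if g \<le> - ereal K then g else 0))"
  using assms unfolding less_eq_ennreal.rep_eq
  by (cases g) (auto simp: plus_ennreal.rep_eq enn2ereal_e2ennreal_max enn2ereal_ennreal_max max_def)

definition lower_tail :: "real \<Rightarrow> ('a \<Rightarrow> ereal) \<Rightarrow> 'a \<Rightarrow> ereal" where
  "lower_tail K g = (\<lambda>x. if g x \<le> - ereal K then g x else 0)"

lemma borel_measurable_lower_tail [measurable]:
  assumes [measurable]: "g \<in> borel_measurable M"
  shows "lower_tail K g \<in> borel_measurable M"
  unfolding lower_tail_def by measurable

lemma ext_expectation_add_le_nn_integral_shift: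
  assumes "prob_space M" and [measurable]: "g \<in> borel_measurable M" and "0 \<le> K"
  shows "ext_expectation M g + ereal K \<le> enn2ereal (\<integral>\<^sup>+x. e2ennreal (g x + ereal K) \<partial>M)"
proof -
  interpret prob_space M by fact
  define p where "p = (\<integral>\<^sup>+x. e2ennreal (g x) \<partial>M)"
  define n where "n = (\<integral>\<^sup>+x. e2ennreal (- g x) \<partial>M)"
  define q where "q = (\<integral>\<^sup>+x. e2ennreal (g x + ereal K) \<partial>M)"
  have "p \<le> q"
    unfolding p_def q_def
    by (intro nn_integral_mono e2ennreal_mono) (simp add: \<open>0 \<le> K\<close> ereal_le_add_self)
  have "p + ennreal K = (\<integral>\<^sup>+x. e2ennreal (g x) + ennreal K \<partial>M)"
    unfolding p_def by (simp add: nn_integral_add emeasure_space_1)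
  also have "\<dots> \<le> (\<integral>\<^sup>+x. e2ennreal (g x + ereal K) + e2ennreal (- g x) \<partial>M)"
    by (intro nn_integral_mono e2ennreal_add_ennreal_le \<open>0 \<le> K\<close>)
  also have "\<dots> = q + n"
    unfolding q_def n_def by (simp add: nn_integral_add)
  finally have "p + ennreal K \<le> q + n" .
  then show ?thesis
    using \<open>p \<le> q\<close> \<open>0 \<le> K\<close> unfolding ext_expectation_def Let_def p_def[symmetric] n_def[symmetric]
      q_def[symmetric]
    by (cases p rule: ennreal_cases; cases q rule: ennreal_cases; cases n rule: ennreal_cases)
      (auto simp: ennreal_plus[symmetric] top_unique simp del: ennreal_plus)
qed

lemma nn_integral_shift_add_ext_expectation_lower_tail_le:
  assumes "prob_space M" and [measurable]: "g \<in> borel_measurable M" and "0 \<le> K"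
  shows "enn2ereal (\<integral>\<^sup>+x. e2ennreal (g x + ereal K) \<partial>M)
      + ext_expectation M (lower_tail K g)
    \<le> ext_expectation M g + ereal K"
proof -
  interpret prob_space M by fact
  define p where "p = (\<integral>\<^sup>+x. e2ennreal (g x) \<partial>M)"
  define n where "n = (\<integral>\<^sup>+x. e2ennreal (- g x) \<partial>M)"
  define q where "q = (\<integral>\<^sup>+x. e2ennreal (g x + ereal K) \<partial>M)"
  define n\<^sub>K where "n\<^sub>K = (\<integral>\<^sup>+x. e2ennreal (- lower_tail K g x) \<partial>M)"
  have "e2ennreal (lower_tail K g x) = 0" for x
    using \<open>0 \<le> K\<close> unfolding lower_tail_def
    by (intro e2ennreal_neg) (auto intro: order.trans[of _ "- ereal K"])
  then have tail: "ext_expectation M (lower_tail K g) = - enn2ereal n\<^sub>K"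
    unfolding ext_expectation_def Let_def n\<^sub>K_def by (simp add: zero_ennreal.rep_eq)
  have "q \<le> (\<integral>\<^sup>+x. e2ennreal (g x) + ennreal K \<partial>M)"
    unfolding q_def by (intro nn_integral_mono e2ennreal_add_ereal_le \<open>0 \<le> K\<close>)
  also have "\<dots> = p + ennreal K"
    unfolding p_def by (simp add: nn_integral_add emeasure_space_1)
  finally have "q \<le> p + ennreal K" .
  have "q + n = (\<integral>\<^sup>+x. e2ennreal (g x + ereal K) + e2ennreal (- g x) \<partial>M)"
    unfolding q_def n_def by (simp add: nn_integral_add)
  also have "\<dots> \<le> (\<integral>\<^sup>+x. e2ennreal (g x) + ennreal K + e2ennreal (- lower_tail K g x) \<partial>M)"
    unfolding lower_tail_def by (intro nn_integral_mono e2ennreal_add_ereal_add_neg_le \<open>0 \<le> K\<close>)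
  also have "\<dots> = p + ennreal K + n\<^sub>K"
    unfolding p_def n\<^sub>K_def by (simp add: nn_integral_add emeasure_space_1)
  finally have "q + n \<le> p + ennreal K + n\<^sub>K" .
  moreover have "ext_expectation M g = (if p = \<infinity> then \<infinity> else enn2ereal p - enn2ereal n)"
    unfolding ext_expectation_def Let_def p_def n_def ..
  ultimately show ?thesis
    using \<open>q \<le> p + ennreal K\<close> \<open>0 \<le> K\<close> unfolding tail q_def[symmetric]
    by (cases p rule: ennreal_cases; cases q rule: ennreal_cases; cases n rule: ennreal_cases;
        cases n\<^sub>K rule: ennreal_cases)
      (auto simp: ennreal_plus[symmetric] top_unique simp del: ennreal_plus)
qed

section \<open>The epigraphical liminf\<close>

definition tail_inf :: "(nat \<Rightarrow> 'a::metric_space \<Rightarrow> ereal) \<Rightarrow> nat \<Rightarrow> real \<Rightarrow> 'a \<Rightarrow> ereal" where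
  "tail_inf h N \<delta> \<xi> = (INF p \<in> {(\<nu>, \<zeta>). \<nu> \<ge> N \<and> dist \<zeta> \<xi> < \<delta>}. h (fst p) (snd p))"

lemma epi_liminf_eq_SUP_tail_inf: "epi_liminf h \<xi> = (SUP \<delta>\<in>{0<..}. SUP N. tail_inf h N \<delta> \<xi>)"
  unfolding epi_liminf_def tail_inf_def ..

lemma tail_inf_mono:
  assumes "N \<le> N'" and "dist \<xi>' \<xi> + \<delta>' \<le> \<delta>"
  shows "tail_inf h N \<delta> \<xi> \<le> tail_inf h N' \<delta>' \<xi>'"
  unfolding tail_inf_def
proof (rule INF_superset_mono)
  show "{(\<nu>, \<zeta>). N' \<le> \<nu> \<and> dist \<zeta> \<xi>' < \<delta>'} \<subseteq> {(\<nu>, \<zeta>). N \<le> \<nu> \<and> dist \<zeta> \<xi> < \<delta>}"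
  proof clarsimp
    fix \<nu> \<zeta> assume "N' \<le> \<nu>" "dist \<zeta> \<xi>' < \<delta>'"
    then show "N \<le> \<nu> \<and> dist \<zeta> \<xi> < \<delta>"
      using assms dist_triangle[of \<zeta> \<xi> \<xi>'] by linarith
  qed
qed simp

lemma tail_inf_le: "N \<le> \<nu> \<Longrightarrow> 0 < \<delta> \<Longrightarrow> tail_inf h N \<delta> \<xi> \<le> h \<nu> \<xi>"
  unfolding tail_inf_def by (rule INF_lower2[of "(\<nu>, \<xi>)"]) auto

lemma tail_inf_le_epi_liminf: "0 < \<delta> \<Longrightarrow> tail_inf h N \<delta> \<xi> \<le> epi_liminf h \<xi>"
  unfolding epi_liminf_eq_SUP_tail_inf by (rule SUP_upper2[of \<delta>]) (auto intro: SUP_upper)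

lemma less_epi_liminfD: "y < epi_liminf h \<xi> \<Longrightarrow> \<exists>\<delta>>0. \<exists>N. y < tail_inf h N \<delta> \<xi>"
  unfolding epi_liminf_eq_SUP_tail_inf by (auto simp: less_SUP_iff)

lemma open_epi_liminf_greater: "open {\<xi>. y < epi_liminf h \<xi>}"
  unfolding open_contains_ball
proof safe
  fix \<xi> assume "y < epi_liminf h \<xi>"
  then obtain \<delta> N where "0 < \<delta>" "y < tail_inf h N \<delta> \<xi>"
    using less_epi_liminfD by blast
  have "y < epi_liminf h \<xi>'" if "\<xi>' \<in> ball \<xi> (\<delta>/2)" for \<xi>'
  proof -
    have "tail_inf h N \<delta> \<xi> \<le> tail_inf h N (\<delta>/2) \<xi>'"
      using that by (intro tail_inf_mono) (auto simp: dist_commute)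
    also have "\<dots> \<le> epi_liminf h \<xi>'"
      using \<open>0 < \<delta>\<close> by (intro tail_inf_le_epi_liminf) simp
    finally show ?thesis
      using \<open>y < tail_inf h N \<delta> \<xi>\<close> by simp
  qed
  then show "\<exists>e>0. ball \<xi> e \<subseteq> {\<xi>. y < epi_liminf h \<xi>}"
    using \<open>0 < \<delta>\<close> by (intro exI[of _ "\<delta>/2"]) auto
qed

lemma borel_measurable_epi_liminf: "epi_liminf h \<in> borel_measurable borel"
  by (rule borel_measurableI_greater) (simp add: open_epi_liminf_greater)

section \<open>Lipschitz minorants\<close>

text \<open>The Pasch--Hausdorff envelope: for \<open>g \<ge> 0\<close> the largest \<open>L\<close>-Lipschitz function below \<open>g\<close>.\<close>

definition lipschitz_minorant :: "real \<Rightarrow> ('a::metric_space \<Rightarrow> real) \<Rightarrow> 'a \<Rightarrow> real" where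
  "lipschitz_minorant L g x = (INF y. g y + L * dist x y)"

lemma lipschitz_minorant_greatest:
  "(\<And>y. c \<le> g y + L * dist x y) \<Longrightarrow> c \<le> lipschitz_minorant L g x"
  unfolding lipschitz_minorant_def by (rule cINF_greatest) auto

context
  fixes L :: real and g :: "'a::metric_space \<Rightarrow> real"
  assumes L_nonneg: "0 \<le> L" and g_nonneg: "\<And>y. 0 \<le> g y"
begin

lemma lipschitz_minorant_le: "lipschitz_minorant L g x \<le> g y + L * dist x y"
  unfolding lipschitz_minorant_def
  by (rule cINF_lower)
    (auto intro!: bdd_belowI[of _ 0] add_nonneg_nonneg mult_nonneg_nonneg g_nonneg L_nonneg)

lemma lipschitz_minorant_le_self: "lipschitz_minorant L g x \<le> g x"
  using lipschitz_minorant_le[of x x] by simp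

lemma lipschitz_minorant_nonneg: "0 \<le> lipschitz_minorant L g x"
  by (intro lipschitz_minorant_greatest add_nonneg_nonneg mult_nonneg_nonneg g_nonneg L_nonneg
      zero_le_dist)

lemma lipschitz_on_lipschitz_minorant: "L-lipschitz_on UNIV (lipschitz_minorant L g)"
proof (rule lipschitz_onI)
  have one_sided: "lipschitz_minorant L g x \<le> lipschitz_minorant L g x' + L * dist x x'" for x x'
  proof -
    have "lipschitz_minorant L g x - L * dist x x' \<le> lipschitz_minorant L g x'"
    proof (rule lipschitz_minorant_greatest)
      fix y
      have "L * dist x y \<le> L * dist x' y + L * dist x x'"
        using dist_triangle[of x y x'] L_nonneg
        by (simp add: distrib_left[symmetric] mult_left_mono dist_commute)
      then show "lipschitz_minorant L g x - L * dist x x' \<le> g y + L * dist x' y"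
        using lipschitz_minorant_le[of x y] by linarith
    qed
    then show ?thesis by linarith
  qed
  show "dist (lipschitz_minorant L g x) (lipschitz_minorant L g x') \<le> L * dist x x'" for x x'
    using one_sided[of x x'] one_sided[of x' x] by (simp add: dist_real_def dist_commute abs_le_iff)
qed (rule L_nonneg)

lemma lipschitz_minorant_ge_on_ball:
  assumes "\<And>y. dist x y < r \<Longrightarrow> c \<le> g y" and "c \<le> L * r"
  shows "c \<le> lipschitz_minorant L g x"
proof (rule lipschitz_minorant_greatest)
  fix y
  show "c \<le> g y + L * dist x y"
  proof (cases "dist x y < r")
    case True
    then show ?thesis
      using assms(1) L_nonneg by (simp add: add_increasing2)
  next
    case False
    then have "L * r \<le> L * dist x y"
      using L_nonneg by (intro mult_left_mono) auto
    then show ?thesis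
      using assms(2) g_nonneg[of y] by linarith
  qed
qed

end

lemma lipschitz_minorant_mono:
  assumes "0 \<le> L" "L \<le> L'" "\<And>y. 0 \<le> g y" "\<And>y. g y \<le> g' y"
  shows "lipschitz_minorant L g x \<le> lipschitz_minorant L' g' x"
proof (rule lipschitz_minorant_greatest)
  fix y
  have "L * dist x y \<le> L' * dist x y"
    using assms(2) by (intro mult_right_mono) auto
  then show "lipschitz_minorant L g x \<le> g' y + L' * dist x y"
    using lipschitz_minorant_le[of L g x y, OF assms(1,3)] assms(4)[of y] by linarith
qed

section \<open>Lipschitz approximation of the epigraphical liminf\<close>

text \<open>
  Clipping to \<open>[0, m]\<close> makes the approximants bounded; shrinking the radius to \<open>1 / (m + 1)\<close>
  while the Lipschitz constant grows to \<open>m\<close> makes them increase to \<open>(epi_liminf h + K)\<^sub>+\<close>.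
\<close>

definition clipped_tail_inf :: "(nat \<Rightarrow> 'a::metric_space \<Rightarrow> ereal) \<Rightarrow> real \<Rightarrow> nat \<Rightarrow> 'a \<Rightarrow> real" where
  "clipped_tail_inf h K m \<zeta> =
     real_of_ereal (max 0 (min (tail_inf h m (1 / (real m + 1)) \<zeta> + ereal K) (ereal (real m))))"

lemma ereal_clipped_tail_inf:
  "ereal (clipped_tail_inf h K m \<zeta>) =
     max 0 (min (tail_inf h m (1 / (real m + 1)) \<zeta> + ereal K) (ereal (real m)))"
  unfolding clipped_tail_inf_def
  by (cases "tail_inf h m (1 / (real m + 1)) \<zeta> + ereal K") (auto simp: min_def max_def)

lemma clipped_tail_inf_nonneg: "0 \<le> clipped_tail_inf h K m \<zeta>"
  using ereal_clipped_tail_inf[of h K m \<zeta>] by (metis ereal_less_eq(5) max.cobounded1)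

lemma clipped_tail_inf_le: "clipped_tail_inf h K m \<zeta> \<le> real m"
  using ereal_clipped_tail_inf[of h K m \<zeta>] by (metis ereal_less_eq(3) max.bounded_iff min.cobounded2
      zero_ereal_def of_nat_0_le_iff)

definition epi_approx :: "(nat \<Rightarrow> 'a::metric_space \<Rightarrow> ereal) \<Rightarrow> real \<Rightarrow> nat \<Rightarrow> 'a \<Rightarrow> real" where
  "epi_approx h K m = lipschitz_minorant (real m) (clipped_tail_inf h K m)"

lemma epi_approx_le: "epi_approx h K m \<xi> \<le> clipped_tail_inf h K m \<xi>"
  unfolding epi_approx_def by (intro lipschitz_minorant_le_self clipped_tail_inf_nonneg) simp

lemma epi_approx_nonneg: "0 \<le> epi_approx h K m \<xi>"
  unfolding epi_approx_def by (intro lipschitz_minorant_nonneg clipped_tail_inf_nonneg) simp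

lemma epi_approx_le_of_nat: "epi_approx h K m \<xi> \<le> real m"
  using epi_approx_le[of h K m \<xi>] clipped_tail_inf_le[of h K m \<xi>] by linarith

lemma continuous_on_epi_approx: "continuous_on UNIV (epi_approx h K m)"
  unfolding epi_approx_def
  by (rule lipschitz_on_continuous_on[OF lipschitz_on_lipschitz_minorant])
    (simp_all add: clipped_tail_inf_nonneg)

lemma bounded_range_epi_approx: "bounded (range (epi_approx h K m))"
  unfolding bounded_iff
  by (intro exI[of _ "real m"]) (auto simp: abs_of_nonneg epi_approx_nonneg epi_approx_le_of_nat)

lemma borel_measurable_epi_approx [measurable]: "epi_approx h K m \<in> borel_measurable borel"
  by (rule borel_measurable_continuous_onI[OF continuous_on_epi_approx])

lemma epi_approx_Suc_mono: "epi_approx h K m \<xi> \<le> epi_approx h K (Suc m) \<xi>"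
  unfolding epi_approx_def
proof (rule lipschitz_minorant_mono)
  show "clipped_tail_inf h K m \<zeta> \<le> clipped_tail_inf h K (Suc m) \<zeta>" for \<zeta>
  proof -
    have "tail_inf h m (1 / (real m + 1)) \<zeta> \<le> tail_inf h (Suc m) (1 / (real (Suc m) + 1)) \<zeta>"
      by (rule tail_inf_mono) (auto simp: field_simps)
    then have "ereal (clipped_tail_inf h K m \<zeta>) \<le> ereal (clipped_tail_inf h K (Suc m) \<zeta>)"
      unfolding ereal_clipped_tail_inf by (intro max.mono min.mono add_right_mono) auto
    then show ?thesis by simp
  qed
qed (simp_all add: clipped_tail_inf_nonneg)

lemma ennreal_epi_approx_le:
  assumes "m \<le> \<nu>"
  shows "ennreal (epi_approx h K m \<xi>) \<le> e2ennreal (h \<nu> \<xi> + ereal K)"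
proof -
  have "tail_inf h m (1 / (real m + 1)) \<xi> + ereal K \<le> h \<nu> \<xi> + ereal K"
    by (intro add_right_mono tail_inf_le[OF assms]) simp
  then have "ereal (epi_approx h K m \<xi>) \<le> max 0 (h \<nu> \<xi> + ereal K)"
    using epi_approx_le[of h K m \<xi>] unfolding ereal_less_eq(3)[symmetric] ereal_clipped_tail_inf
    by (meson max.mono min.coboundedI1 order.refl order.trans)
  then show ?thesis
    using epi_approx_nonneg[of h K m \<xi>] by (simp add: less_eq_ennreal.rep_eq enn2ereal_e2ennreal_max)
qed

lemma e2ennreal_epi_liminf_le_SUP_epi_approx:
  "e2ennreal (epi_liminf h \<xi> + ereal K) \<le> (SUP m. ennreal (epi_approx h K m \<xi>))"
proof (rule dense_le)
  fix c assume c: "c < e2ennreal (epi_liminf h \<xi> + ereal K)"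
  then obtain c' where c': "c = ennreal c'" "0 \<le> c'"
    by (cases c rule: ennreal_cases) (auto simp: top_unique)
  then have "ereal c' < epi_liminf h \<xi> + ereal K"
    using c by (auto simp: less_ennreal.rep_eq enn2ereal_e2ennreal_max max_def split: if_splits)
  then have "ereal (c' - K) < epi_liminf h \<xi>"
    by (cases "epi_liminf h \<xi>") auto
  then obtain \<delta> N where "0 < \<delta>" and \<delta>N: "ereal (c' - K) < tail_inf h N \<delta> \<xi>"
    using less_epi_liminfD by blast
  obtain m :: nat where m: "max (real N) (max c' (2 * (c' + 1) / \<delta>)) < real m"
    using reals_Archimedean2 by blast
  have "N \<le> m" and "c' \<le> real m" and "1 / (real m + 1) \<le> \<delta> / 2" and "c' \<le> real m * (\<delta> / 2)"
    using m \<open>0 < \<delta>\<close> \<open>0 \<le> c'\<close> by (auto simp: field_simps)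
  have "c' \<le> clipped_tail_inf h K m \<zeta>" if "dist \<xi> \<zeta> < \<delta> / 2" for \<zeta>
  proof -
    have "tail_inf h N \<delta> \<xi> \<le> tail_inf h m (1 / (real m + 1)) \<zeta>"
      using \<open>N \<le> m\<close> that \<open>1 / (real m + 1) \<le> \<delta> / 2\<close>
      by (intro tail_inf_mono) (auto simp: dist_commute)
    with \<delta>N have "ereal (c' - K) < tail_inf h m (1 / (real m + 1)) \<zeta>"
      by (rule order.strict_trans2)
    then have "ereal c' \<le> tail_inf h m (1 / (real m + 1)) \<zeta> + ereal K"
      by (cases "tail_inf h m (1 / (real m + 1)) \<zeta>") auto
    then have "ereal c' \<le> ereal (clipped_tail_inf h K m \<zeta>)"
      using \<open>c' \<le> real m\<close> unfolding ereal_clipped_tail_inf by (simp add: le_max_iff_disj)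
    then show ?thesis by simp
  qed
  then have "c' \<le> epi_approx h K m \<xi>"
    unfolding epi_approx_def using \<open>c' \<le> real m * (\<delta> / 2)\<close>
    by (intro lipschitz_minorant_ge_on_ball[where r="\<delta> / 2"] clipped_tail_inf_nonneg) auto
  then show "c \<le> (SUP m. ennreal (epi_approx h K m \<xi>))"
    unfolding c' by (intro SUP_upper2[of m]) (auto intro: ennreal_leI)
qed

lemma nn_integral_epi_approx:
  assumes "prob_space M" and sets_M: "sets M = sets borel"
  shows "(\<integral>\<^sup>+x. ennreal (epi_approx h K m x) \<partial>M) = ennreal (\<integral>x. epi_approx h K m x \<partial>M)"
proof -
  interpret prob_space M by fact
  have [measurable]: "epi_approx h K m \<in> borel_measurable M"
    by (simp add: measurable_cong_sets[OF sets_M refl])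
  have "integrable M (epi_approx h K m)"
    by (rule integrable_const_bound[where B = "real m"])
      (auto simp: abs_of_nonneg epi_approx_nonneg epi_approx_le_of_nat)
  then show ?thesis
    by (rule nn_integral_eq_integral) (simp add: epi_approx_nonneg)
qed

lemma ext_expectation_epi_liminf_add_le_SUP:
  assumes "prob_space P" and sets_P: "sets P = sets borel" and "0 \<le> K"
  shows "ext_expectation P (epi_liminf h) + ereal K \<le> (SUP m. ereal (\<integral>x. epi_approx h K m x \<partial>P))"
proof -
  have [measurable]: "epi_liminf h \<in> borel_measurable P" "epi_approx h K m \<in> borel_measurable P" for m
    using borel_measurable_epi_liminf by (simp_all add: measurable_cong_sets[OF sets_P refl])
  have "(\<integral>\<^sup>+x. e2ennreal (epi_liminf h x + ereal K) \<partial>P)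
      \<le> (\<integral>\<^sup>+x. (SUP m. ennreal (epi_approx h K m x)) \<partial>P)"
    by (intro nn_integral_mono e2ennreal_epi_liminf_le_SUP_epi_approx)
  also have "\<dots> = (SUP m. \<integral>\<^sup>+x. ennreal (epi_approx h K m x) \<partial>P)"
    by (intro nn_integral_monotone_convergence_SUP incseq_SucI le_funI ennreal_leI
        epi_approx_Suc_mono) simp
  also have "\<dots> = (SUP m. ennreal (\<integral>x. epi_approx h K m x \<partial>P))"
    by (simp add: nn_integral_epi_approx[OF assms(1,2)])
  finally have "enn2ereal (\<integral>\<^sup>+x. e2ennreal (epi_liminf h x + ereal K) \<partial>P)
      \<le> (SUP m. ereal (\<integral>x. epi_approx h K m x \<partial>P))"
    by (simp add: less_eq_ennreal.rep_eq enn2ereal_SUP_ennreal integral_nonneg epi_approx_nonneg)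
  moreover have "ext_expectation P (epi_liminf h) + ereal K
      \<le> enn2ereal (\<integral>\<^sup>+x. e2ennreal (epi_liminf h x + ereal K) \<partial>P)"
    by (rule ext_expectation_add_le_nn_integral_shift) (simp_all add: assms)
  ultimately show ?thesis
    by (rule order.trans[rotated])
qed

lemma integral_epi_approx_add_ext_expectation_lower_tail_le:
  assumes "prob_space M" and sets_M: "sets M = sets borel"
    and "h \<nu> \<in> borel_measurable borel" and "m \<le> \<nu>" and "0 \<le> K"
  shows "ereal (\<integral>x. epi_approx h K m x \<partial>M)
      + ext_expectation M (lower_tail K (h \<nu>))
    \<le> ext_expectation M (h \<nu>) + ereal K"
proof -
  have [measurable]: "h \<nu> \<in> borel_measurable M"
    using assms(3) by (simp add: measurable_cong_sets[OF sets_M refl])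
  have "ennreal (\<integral>x. epi_approx h K m x \<partial>M)
      \<le> (\<integral>\<^sup>+x. e2ennreal (h \<nu> x + ereal K) \<partial>M)"
    unfolding nn_integral_epi_approx[OF assms(1,2), symmetric]
    by (intro nn_integral_mono ennreal_epi_approx_le \<open>m \<le> \<nu>\<close>)
  then have "ereal (\<integral>x. epi_approx h K m x \<partial>M)
      \<le> enn2ereal (\<integral>\<^sup>+x. e2ennreal (h \<nu> x + ereal K) \<partial>M)"
    by (simp add: less_eq_ennreal.rep_eq integral_nonneg epi_approx_nonneg)
  then show ?thesis
    using nn_integral_shift_add_ext_expectation_lower_tail_le[OF assms(1) _ \<open>0 \<le> K\<close>, of "h \<nu>"]
    by (auto intro: order.trans add_right_mono)
qed

lemma integral_epi_approx_add_liminf_lower_tail_le: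
  fixes Ps :: "nat \<Rightarrow> 'a::metric_space measure"
  assumes sets_Ps: "\<And>\<nu>. sets (Ps \<nu>) = sets borel" and prob_Ps: "\<And>\<nu>. prob_space (Ps \<nu>)"
    and weak: "weak_conv_measures Ps P" and meas_h: "\<And>\<nu>. h \<nu> \<in> borel_measurable borel"
    and "0 \<le> K"
  shows "ereal (\<integral>x. epi_approx h K m x \<partial>P)
      + liminf (\<lambda>\<nu>. ext_expectation (Ps \<nu>) (lower_tail K (h \<nu>)))
    \<le> liminf (\<lambda>\<nu>. ext_expectation (Ps \<nu>) (h \<nu>)) + ereal K"
proof -
  have "(\<lambda>\<nu>. \<integral>x. epi_approx h K m x \<partial>Ps \<nu>) \<longlonglongrightarrow> (\<integral>x. epi_approx h K m x \<partial>P)"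
    using weak continuous_on_epi_approx bounded_range_epi_approx
    unfolding weak_conv_measures_def by blast
  then have "ereal (\<integral>x. epi_approx h K m x \<partial>P)
      + liminf (\<lambda>\<nu>. ext_expectation (Ps \<nu>) (lower_tail K (h \<nu>)))
    = liminf (\<lambda>\<nu>. ereal (\<integral>x. epi_approx h K m x \<partial>Ps \<nu>)
      + ext_expectation (Ps \<nu>) (lower_tail K (h \<nu>)))"
    by (intro ereal_liminf_lim_add[symmetric]) (simp_all add: lim_ereal)
  also have "\<dots> \<le> liminf (\<lambda>\<nu>. ext_expectation (Ps \<nu>) (h \<nu>) + ereal K)"
    using eventually_ge_at_top[of m]
    by (intro Liminf_mono, eventually_elim)
      (intro integral_epi_approx_add_ext_expectation_lower_tail_le prob_Ps sets_Ps meas_h \<open>0 \<le> K\<close>)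
  also have "\<dots> = liminf (\<lambda>\<nu>. ext_expectation (Ps \<nu>) (h \<nu>)) + ereal K"
    by (simp add: Liminf_add_ereal_right)
  finally show ?thesis .
qed

lemma ereal_le_if_add_Liminf_eq_0:
  fixes a c :: ereal and L :: "real \<Rightarrow> ereal"
  assumes L: "Liminf at_top L = 0" and le: "\<And>K. 0 \<le> K \<Longrightarrow> L K \<noteq> -\<infinity> \<Longrightarrow> a + L K \<le> c"
  shows "a \<le> c"
proof -
  have "\<forall>\<^sub>F K in at_top. -1 < L K"
    using L le_Liminf_iff[of 0 at_top L] by simp
  then have ev: "\<forall>\<^sub>F K in at_top. a + L K \<le> c"
    using eventually_ge_at_top[of "0::real"] by eventually_elim (auto intro: le)
  show ?thesis
  proof (cases a)
    case (real r)
    then have "a = Liminf at_top (\<lambda>K. a + L K)"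
      using L by (simp add: Liminf_add_ereal_left)
    also have "\<dots> \<le> Liminf at_top (\<lambda>K::real. c)"
      using ev by (rule Liminf_mono)
    finally show ?thesis
      by (simp add: Liminf_const)
  next
    case PInf
    with ev have "eventually (\<lambda>K::real. c = \<infinity>) at_top"
      by simp
    with PInf show ?thesis
      by simp
  qed simp
qed

theorem theorem3p4:
  fixes Ps :: "nat \<Rightarrow> 'a::metric_space measure"
    and P :: "'a measure"
    and h :: "nat \<Rightarrow> 'a \<Rightarrow> ereal"
  assumes sets_Ps: "\<And>\<nu>. sets (Ps \<nu>) = sets borel"
    and prob_Ps: "\<And>\<nu>. prob_space (Ps \<nu>)"
    and sets_P: "sets P = sets borel"
    and prob_P: "prob_space P"
    and weak: "weak_conv_measures Ps P"
    and meas_h: "\<And>\<nu>. h \<nu> \<in> borel_measurable borel"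
    and tail: "Liminf at_top (\<lambda>K::real. liminf (\<lambda>\<nu>.
                 ext_expectation (Ps \<nu>) (\<lambda>x. if h \<nu> x \<le> - ereal K then h \<nu> x else 0))) = 0"
  shows "liminf (\<lambda>\<nu>. ext_expectation (Ps \<nu>) (h \<nu>)) \<ge> ext_expectation P (epi_liminf h)"
proof (rule ereal_le_if_add_Liminf_eq_0[OF tail[folded lower_tail_def]])
  fix K :: real
  let ?L = "liminf (\<lambda>\<nu>. ext_expectation (Ps \<nu>) (lower_tail K (h \<nu>)))"
  let ?c = "liminf (\<lambda>\<nu>. ext_expectation (Ps \<nu>) (h \<nu>))"
  assume "0 \<le> K" and "?L \<noteq> -\<infinity>"
  have "ext_expectation P (epi_liminf h) + ?L + ereal K = ext_expectation P (epi_liminf h) + ereal K + ?L"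
    by (simp only: ac_simps)
  also have "\<dots> \<le> (SUP m. ereal (\<integral>x. epi_approx h K m x \<partial>P)) + ?L"
    by (intro add_right_mono ext_expectation_epi_liminf_add_le_SUP prob_P sets_P \<open>0 \<le> K\<close>)
  also have "\<dots> \<le> ?c + ereal K"
    using \<open>?L \<noteq> -\<infinity>\<close>
    by (intro SUP_ereal_le_addI integral_epi_approx_add_liminf_lower_tail_le assms \<open>0 \<le> K\<close>)
  finally show "ext_expectation P (epi_liminf h) + ?L \<le> ?c"
    by (simp add: ereal_add_le_add_iff2)
qed

end
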